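(* For every integer $n\ge 3$, the graph $R_n$ is a rooted directed path graph.
   Context: For $n\ge 3$, $R_n$ is the graph with vertex set $\bigcup_{i=1}^n\{a_i,b_i,c_i,d_i\}$ (all distinct, $4n$ vertices), in which two distinct vertices are adjacent iff they both belong to one of the sets $C_i=\{a_i,b_i,c_i,d_i\}$ ($1\le i\le n$) or $C'_i=\{a_j \mid i\le j\le n\}\cup\{b_i,b_{i+1},c_i\}$ ($1\le i\le n-1$); these sets are exactly the maximal cliques of $R_n$. A graph is a rooted directed path graph if it is the intersection graph of a family of directed paths in an arborescence (a rooted tree with all edges directed away from the root), i.e. vertices correspond to directed paths and two distinct vertices are adjacent iff their paths share a node. *)

theory Defs
  imports Main
begin

datatype rvert = Va nat | Vb nat | Vc nat | Vd nat

definition cliqueC :: "nat \<Rightarrow> rvert set" where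
  "cliqueC i = {Va i, Vb i, Vc i, Vd i}"

definition cliqueC' :: "nat \<Rightarrow> nat \<Rightarrow> rvert set" where
  "cliqueC' n i = {Va j | j. i \<le> j \<and> j \<le> n} \<union> {Vb i, Vb (Suc i), Vc i}"

definition R_verts :: "nat \<Rightarrow> rvert set" where
  "R_verts n = (\<Union>i\<in>{1..n}. cliqueC i)"

definition R_adj :: "nat \<Rightarrow> rvert \<Rightarrow> rvert \<Rightarrow> bool" where
  "R_adj n u v \<longleftrightarrow> u \<noteq> v \<and>
     ((\<exists>i\<in>{1..n}. u \<in> cliqueC i \<and> v \<in> cliqueC i) \<or>
      (\<exists>i\<in>{1..n-1}. u \<in> cliqueC' n i \<and> v \<in> cliqueC' n i))"

definition arborescence :: "nat set \<Rightarrow> nat \<Rightarrow> (nat \<times> nat) set \<Rightarrow> bool" where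
  "arborescence N r Arc \<longleftrightarrow> finite N \<and> r \<in> N \<and> Arc \<subseteq> N \<times> N \<and>
     (\<forall>x. (x, r) \<notin> Arc) \<and>
     (\<forall>y\<in>N. y \<noteq> r \<longrightarrow> (\<exists>!x. (x, y) \<in> Arc)) \<and>
     (\<forall>y\<in>N. (r, y) \<in> Arc\<^sup>*)"

definition dpath :: "(nat \<times> nat) set \<Rightarrow> nat list \<Rightarrow> bool" where
  "dpath Arc p \<longleftrightarrow> p \<noteq> [] \<and> (\<forall>i. Suc i < length p \<longrightarrow> (p ! i, p ! Suc i) \<in> Arc)"

definition rooted_directed_path_graph :: "'v set \<Rightarrow> ('v \<Rightarrow> 'v \<Rightarrow> bool) \<Rightarrow> bool" where
  "rooted_directed_path_graph V E \<longleftrightarrow>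
     (\<exists>N r Arc P. arborescence N r Arc \<and>
        (\<forall>v\<in>V. dpath Arc (P v) \<and> set (P v) \<subseteq> N) \<and>
        (\<forall>u\<in>V. \<forall>v\<in>V. u \<noteq> v \<longrightarrow> (E u v \<longleftrightarrow> set (P u) \<inter> set (P v) \<noteq> {})))"

end

theory Submission
  imports Defs
begin

(* Arrange the maximal cliques in an arborescence: the spine C'_1 -> C'_2 -> ... -> C'_(n-1),
   rooted at C'_1, with each C_j a leaf below C'_j (and C_n below C'_(n-1)). The cliques
   containing a given vertex then form a directed path: C'_1, ..., C'_j, C_j for a_j (cut off at
   C'_(n-1)), C'_(j-1), C'_j, C_j for b_j, C'_j, C_j for c_j, and C_j alone for d_j. Two vertices
   are adjacent iff they share a maximal clique, i.e. iff their paths share a node. *)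

lemma dpath_iff_successively:
  "dpath Arc p \<longleftrightarrow> p \<noteq> [] \<and> successively (\<lambda>x y. (x, y) \<in> Arc) p"
  by (simp add: dpath_def successively_conv_nth)

lemma dpath_upt_snoc:
  assumes "\<And>k. lo \<le> k \<Longrightarrow> Suc k < hi \<Longrightarrow> (k, Suc k) \<in> Arc"
    and "lo < hi \<Longrightarrow> (hi - 1, z) \<in> Arc"
  shows "dpath Arc ([lo..<hi] @ [z])"
proof -
  have "successively (\<lambda>x y. (x, y) \<in> Arc) [lo..<hi]"
    using assms(1) by (auto simp: successively_conv_nth)
  then show ?thesis
    using assms(2) by (cases "lo < hi") (auto simp: dpath_iff_successively successively_append_iff)
qed

definition parent_arcs :: "nat set \<Rightarrow> nat \<Rightarrow> (nat \<Rightarrow> nat) \<Rightarrow> (nat \<times> nat) set" where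
  "parent_arcs N r par = {(par y, y) | y. y \<in> N - {r}}"

lemma arborescence_parent_arcs:
  assumes "finite N" "r \<in> N"
    and parent_in: "\<And>y. y \<in> N \<Longrightarrow> y \<noteq> r \<Longrightarrow> par y \<in> N"
    and parent_less: "\<And>y. y \<in> N \<Longrightarrow> y \<noteq> r \<Longrightarrow> par y < y"
  shows "arborescence N r (parent_arcs N r par)"
proof -
  have "(r, y) \<in> (parent_arcs N r par)\<^sup>*" if "y \<in> N" for y
    using that
  proof (induction y rule: less_induct)
    case (less y)
    show ?case
    proof (cases "y = r")
      case False
      then have "(r, par y) \<in> (parent_arcs N r par)\<^sup>*"
        using less parent_in parent_less by blast
      moreover have "(par y, y) \<in> parent_arcs N r par"
        using less.prems False by (auto simp: parent_arcs_def)
      ultimately show ?thesis by (rule rtrancl_into_rtrancl)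
    qed simp
  qed
  then show ?thesis
    using assms by (auto simp: arborescence_def parent_arcs_def)
qed

lemma rooted_directed_path_graph_of_clique_tree:
  assumes "arborescence N r Arc"
    and "\<And>v. v \<in> V \<Longrightarrow> dpath Arc (P v)"
    and "\<And>v. v \<in> V \<Longrightarrow> set (P v) = {x \<in> N. v \<in> K x}"
    and "\<And>u v. u \<in> V \<Longrightarrow> v \<in> V \<Longrightarrow> u \<noteq> v \<Longrightarrow> E u v \<longleftrightarrow> (\<exists>x\<in>N. u \<in> K x \<and> v \<in> K x)"
  shows "rooted_directed_path_graph V E"
  unfolding rooted_directed_path_graph_def
  using assms by (intro exI[of _ N] exI[of _ r] exI[of _ Arc] exI[of _ P]) auto

(* Node i < n of the tree is the spine node C'_i, node n + j is the leaf C_j. *)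
definition R_nodes :: "nat \<Rightarrow> nat set" where
  "R_nodes n = {1..<n} \<union> {n<..2 * n}"

definition R_bag :: "nat \<Rightarrow> nat \<Rightarrow> rvert set" where
  "R_bag n x = (if x < n then cliqueC' n x else cliqueC (x - n))"

definition R_parent :: "nat \<Rightarrow> nat \<Rightarrow> nat" where
  "R_parent n y = (if y < n then y - 1 else min (y - n) (n - 1))"

definition rvert_index :: "rvert \<Rightarrow> nat" where
  "rvert_index v = (case v of Va j \<Rightarrow> j | Vb j \<Rightarrow> j | Vc j \<Rightarrow> j | Vd j \<Rightarrow> j)"

(* The first spine node whose clique contains v; for d_j it lies past the spine end min (j + 1) n. *)
definition spine_start :: "rvert \<Rightarrow> nat" where
  "spine_start v = (case v of Va j \<Rightarrow> 1 | Vb j \<Rightarrow> max 1 (j - 1) | Vc j \<Rightarrow> j | Vd j \<Rightarrow> Suc j)"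

definition R_path :: "nat \<Rightarrow> rvert \<Rightarrow> nat list" where
  "R_path n v = [spine_start v..<min (Suc (rvert_index v)) n] @ [n + rvert_index v]"

lemma R_verts_iff: "v \<in> R_verts n \<longleftrightarrow> 1 \<le> rvert_index v \<and> rvert_index v \<le> n"
  by (cases v) (auto simp: R_verts_def cliqueC_def rvert_index_def)

lemma arborescence_R:
  assumes "n \<ge> 2"
  shows "arborescence (R_nodes n) 1 (parent_arcs (R_nodes n) 1 (R_parent n))"
  using assms by (intro arborescence_parent_arcs) (auto simp: R_nodes_def R_parent_def)

lemma dpath_R_path:
  assumes "n \<ge> 2" "v \<in> R_verts n"
  shows "dpath (parent_arcs (R_nodes n) 1 (R_parent n)) (R_path n v)"
  unfolding R_path_def
  using assms by (intro dpath_upt_snoc)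
    (cases v; force simp: parent_arcs_def R_nodes_def R_parent_def R_verts_iff rvert_index_def spine_start_def)+

lemma set_R_path:
  assumes "v \<in> R_verts n"
  shows "set (R_path n v) = {x \<in> R_nodes n. v \<in> R_bag n x}"
  using assms
  by (cases v) (auto simp: R_path_def R_nodes_def R_bag_def R_verts_iff rvert_index_def spine_start_def cliqueC_def cliqueC'_def)

lemma R_bag_image: "R_bag n ` R_nodes n = cliqueC' n ` {1..n-1} \<union> cliqueC ` {1..n}"
proof -
  have "R_nodes n = {1..n-1} \<union> (+) n ` {1..n}"
    by (auto simp: R_nodes_def image_iff intro: exI[of _ "x - n" for x])
  then have "R_bag n ` R_nodes n = R_bag n ` {1..n-1} \<union> (R_bag n \<circ> (+) n) ` {1..n}"
    by (simp only: image_Un image_comp)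
  moreover have "R_bag n ` {1..n-1} = cliqueC' n ` {1..n-1}"
    by (rule image_cong) (auto simp: R_bag_def)
  moreover have "(R_bag n \<circ> (+) n) ` {1..n} = cliqueC ` {1..n}"
    by (rule image_cong) (auto simp: R_bag_def)
  ultimately show ?thesis
    by simp
qed

lemma R_adj_iff_common_bag:
  assumes "u \<noteq> v"
  shows "R_adj n u v \<longleftrightarrow> (\<exists>x\<in>R_nodes n. u \<in> R_bag n x \<and> v \<in> R_bag n x)"
proof -
  have "(\<exists>x\<in>R_nodes n. u \<in> R_bag n x \<and> v \<in> R_bag n x) \<longleftrightarrow>
      (\<exists>K\<in>R_bag n ` R_nodes n. u \<in> K \<and> v \<in> K)"
    by blast
  then show ?thesis
    using assms unfolding R_bag_image R_adj_def by blast
qed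

theorem mainTheorem2:
  fixes n :: nat
  assumes "n \<ge> 3"
  shows "rooted_directed_path_graph (R_verts n) (R_adj n)"
proof (rule rooted_directed_path_graph_of_clique_tree[where K = "R_bag n"])
  show "arborescence (R_nodes n) 1 (parent_arcs (R_nodes n) 1 (R_parent n))"
    using assms by (intro arborescence_R) simp
  show "dpath (parent_arcs (R_nodes n) 1 (R_parent n)) (R_path n v)" if "v \<in> R_verts n" for v
    using assms that by (intro dpath_R_path) simp_all
  show "set (R_path n v) = {x \<in> R_nodes n. v \<in> R_bag n x}" if "v \<in> R_verts n" for v
    using that by (rule set_R_path)
  show "R_adj n u v \<longleftrightarrow> (\<exists>x\<in>R_nodes n. u \<in> R_bag n x \<and> v \<in> R_bag n x)"
    if "u \<in> R_verts n" "v \<in> R_verts n" "u \<noteq> v" for u v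
    using that(3) by (rule R_adj_iff_common_bag)
qed

end
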